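(* For any $f,g\in L^\infty(\rho_X)$, \[|\mathcal R(\operatorname{sign} f)-\mathcal R(\operatorname{sign} g)|\le\mathbb P_{X\sim\rho_X}\big(\|f-g\|_{L^\infty(\rho_X)}\ge|f(X)|\big).\]
   Context: $\mathcal X=[0,1]^d$, $\rho$ is a probability distribution on $\mathcal X\times\{-1,1\}$ with $X$-marginal $\rho_X$, $(X,Y)\sim\rho$. $\operatorname{sign}(t)=1$ for $t>0$, $-1$ for $t<0$, $0$ for $t=0$, and $\operatorname{sign} f=\operatorname{sign}\circ f$. For a measurable $c$ on $\mathcal X$, $\mathcal R(c)=\mathbb P(c(X)\ne Y)$. *)

theory Defs
  imports "HOL-Probability.Probability"
begin

definition cube :: "(real ^ 'd) set" where
  "cube = {x. \<forall>i. 0 \<le> x $ i \<and> x $ i \<le> 1}"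

definition data_dist :: "((real ^ 'd) \<times> real) measure \<Rightarrow> bool" where
  "data_dist rho \<longleftrightarrow> prob_space rho \<and> sets rho = sets borel \<and>
     emeasure rho (space rho - cube \<times> {-1, 1}) = 0"

definition marginal :: "((real ^ 'd) \<times> real) measure \<Rightarrow> (real ^ 'd) measure" where
  "marginal rho = distr rho borel fst"

definition Linf_norm :: "'a measure \<Rightarrow> ('a \<Rightarrow> real) \<Rightarrow> ereal" where
  "Linf_norm M f = esssup M (\<lambda>x. ereal \<bar>f x\<bar>)"

definition in_Linf :: "'a measure \<Rightarrow> ('a \<Rightarrow> real) \<Rightarrow> bool" where
  "in_Linf M f \<longleftrightarrow> f \<in> borel_measurable M \<and> Linf_norm M f < \<infinity>"

definition sign_fun :: "('a \<Rightarrow> real) \<Rightarrow> 'a \<Rightarrow> real" where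
  "sign_fun f = (\<lambda>x. sgn (f x))"

definition risk :: "((real ^ 'd) \<times> real) measure \<Rightarrow> ((real ^ 'd) \<Rightarrow> real) \<Rightarrow> real" where
  "risk rho c = measure rho {p \<in> space rho. c (fst p) \<noteq> snd p}"

end

theory Submission
  imports Defs
begin

text \<open>Since \<open>\<bar>f - g\<bar> \<le> \<parallel>f - g\<parallel>\<^sub>\<infinity>\<close> almost everywhere and \<open>\<bar>a - b\<bar> < \<bar>a\<bar>\<close> forces
  \<open>sgn a = sgn b\<close>, the classifiers sign f and sign g can disagree, up to a null set, only on
  the event \<open>\<bar>f(X)\<bar> \<le> \<parallel>f - g\<parallel>\<^sub>\<infinity>\<close>; and two events that coincide outside an event C
  differ in probability by at most the probability of C.\<close>

lemma sgn_eq_if_abs_diff_less: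
  fixes a b :: "'a :: linordered_idom"
  assumes "\<bar>a - b\<bar> < \<bar>a\<bar>"
  shows "sgn a = sgn b"
  using assms by (auto simp: sgn_if abs_if split: if_splits)

lemma (in finite_measure) measure_le_of_AE_eq_outside:
  assumes "A \<in> sets M" "B \<in> sets M" "C \<in> sets M"
    and "AE x in M. x \<notin> C \<longrightarrow> (x \<in> A \<longleftrightarrow> x \<in> B)"
  shows "measure M A \<le> measure M B + measure M C"
proof -
  have "AE x in M. x \<in> A \<longrightarrow> x \<in> B \<union> C"
    using assms(4) by eventually_elim auto
  then have "measure M A \<le> measure M (B \<union> C)"
    using assms(2,3) by (intro finite_measure_mono_AE) auto
  also have "\<dots> \<le> measure M B + measure M C"
    using assms(2,3) by (rule measure_Un_le)
  finally show ?thesis .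
qed

lemma (in finite_measure) abs_measure_diff_le_of_AE_eq_outside:
  assumes "A \<in> sets M" "B \<in> sets M" "C \<in> sets M"
    and "AE x in M. x \<notin> C \<longrightarrow> (x \<in> A \<longleftrightarrow> x \<in> B)"
  shows "\<bar>measure M A - measure M B\<bar> \<le> measure M C"
proof -
  have "AE x in M. x \<notin> C \<longrightarrow> (x \<in> B \<longleftrightarrow> x \<in> A)"
    using assms(4) by eventually_elim auto
  then show ?thesis
    using measure_le_of_AE_eq_outside[OF assms] measure_le_of_AE_eq_outside[of B A C] assms(1-3)
    by linarith
qed

lemma AE_le_Linf_norm: "AE x in M. ereal \<bar>f x\<bar> \<le> Linf_norm M f"
  unfolding Linf_norm_def by (rule esssup_AE)

lemma sets_marginal: "sets (marginal rho) = sets borel"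
  by (simp add: marginal_def)

lemma space_marginal: "space (marginal rho) = UNIV"
  by (simp add: marginal_def)

lemma in_Linf_marginal_borel: "in_Linf (marginal rho) f \<Longrightarrow> f \<in> borel_measurable borel"
  by (simp add: in_Linf_def measurable_cong_sets[OF sets_marginal refl])

lemma data_dist_fst_measurable [measurable]: "data_dist rho \<Longrightarrow> fst \<in> rho \<rightarrow>\<^sub>M borel"
  unfolding data_dist_def
  by (simp add: measurable_cong_sets[of rho borel] borel_measurable_continuous_onI continuous_on_fst)

lemma data_dist_snd_measurable [measurable]: "data_dist rho \<Longrightarrow> snd \<in> rho \<rightarrow>\<^sub>M borel"
  unfolding data_dist_def
  by (simp add: measurable_cong_sets[of rho borel] borel_measurable_continuous_onI continuous_on_snd)

lemma abs_risk_diff_le_marginal: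
  assumes rho: "data_dist rho"
    and c: "c \<in> borel_measurable borel" and c': "c' \<in> borel_measurable borel"
    and S: "S \<in> sets borel"
    and agree: "AE x in marginal rho. x \<notin> S \<longrightarrow> c x = c' x"
  shows "\<bar>risk rho c - risk rho c'\<bar> \<le> measure (marginal rho) S"
proof -
  interpret prob_space rho
    using rho by (simp add: data_dist_def)
  have "AE p in rho. fst p \<notin> S \<longrightarrow> c (fst p) = c' (fst p)"
    using AE_distrD[OF data_dist_fst_measurable[OF rho]] agree unfolding marginal_def .
  then have "AE p in rho. p \<notin> fst -` S \<inter> space rho \<longrightarrow>
      (p \<in> {p \<in> space rho. c (fst p) \<noteq> snd p} \<longleftrightarrow> p \<in> {p \<in> space rho. c' (fst p) \<noteq> snd p})"
    by eventually_elim auto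
  moreover have "{p \<in> space rho. c (fst p) \<noteq> snd p} \<in> sets rho"
    and "{p \<in> space rho. c' (fst p) \<noteq> snd p} \<in> sets rho"
    and "fst -` S \<inter> space rho \<in> sets rho"
    using rho c c' S by measurable
  ultimately have "\<bar>risk rho c - risk rho c'\<bar> \<le> measure rho (fst -` S \<inter> space rho)"
    unfolding risk_def by (intro abs_measure_diff_le_of_AE_eq_outside)
  also have "\<dots> = measure (marginal rho) S"
    unfolding marginal_def using rho S by (simp add: measure_distr)
  finally show ?thesis .
qed

theorem lemma6:
  fixes rho :: "((real ^ 'd) \<times> real) measure"
    and f g :: "real ^ 'd \<Rightarrow> real"
  assumes "data_dist rho"
    and "in_Linf (marginal rho) f"
    and "in_Linf (marginal rho) g"
  shows "\<bar>risk rho (sign_fun f) - risk rho (sign_fun g)\<bar>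
    \<le> measure (marginal rho)
        {x \<in> space (marginal rho). Linf_norm (marginal rho) (\<lambda>z. f z - g z) \<ge> ereal \<bar>f x\<bar>}"
proof -
  define N where "N = Linf_norm (marginal rho) (\<lambda>z. f z - g z)"
  have f: "f \<in> borel_measurable borel" and g: "g \<in> borel_measurable borel"
    using assms(2,3) by (simp_all add: in_Linf_marginal_borel)
  have "AE x in marginal rho. ereal \<bar>f x - g x\<bar> \<le> N"
    unfolding N_def by (rule AE_le_Linf_norm)
  then have "AE x in marginal rho. x \<notin> {x. N \<ge> ereal \<bar>f x\<bar>} \<longrightarrow> sign_fun f x = sign_fun g x"
  proof eventually_elim
    case (elim x)
    show ?case
    proof
      assume "x \<notin> {x. N \<ge> ereal \<bar>f x\<bar>}"
      then have "N < ereal \<bar>f x\<bar>"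
        by simp
      with elim have "ereal \<bar>f x - g x\<bar> < ereal \<bar>f x\<bar>"
        by (rule le_less_trans)
      then show "sign_fun f x = sign_fun g x"
        unfolding sign_fun_def by (simp add: sgn_eq_if_abs_diff_less)
    qed
  qed
  moreover have "sign_fun f \<in> borel_measurable borel" and "sign_fun g \<in> borel_measurable borel"
    and "{x. N \<ge> ereal \<bar>f x\<bar>} \<in> sets borel"
    using f g unfolding sign_fun_def by measurable
  ultimately have "\<bar>risk rho (sign_fun f) - risk rho (sign_fun g)\<bar>
      \<le> measure (marginal rho) {x. N \<ge> ereal \<bar>f x\<bar>}"
    using assms(1) by (intro abs_risk_diff_le_marginal)
  then show ?thesis
    by (simp add: N_def space_marginal)
qed

end
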